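(* Let $\mathsf{H}^\ast$ be a clique coverage of $\mathrm{G}$ with $|\mathsf{H}^\ast|=d$, and let $(\mathrm{Q}_1,\dots,\mathrm{Q}_d)$ be an ordering of $\mathsf{H}^\ast$ in which every clique of $\mathsf{H}^\ast$ appears exactly once. For each clique $\mathrm{C}\in\mathsf{H}^\ast$ let $\mathbf{M}_{\mathrm{C}}\in\mathbb{R}^{nb\times nb}$ be a clique-gossip matrix with arbitrary blocks $\mathbf{A}_{ij}(\mathrm{C})$. Put $\mathbf{F}=\mathbf{M}_{\mathrm{Q}_d}\cdots\mathbf{M}_{\mathrm{Q}_{s+1}}\mathbf{M}_{\mathrm{Q}_s}\cdots\mathbf{M}_{\mathrm{Q}_1}$ and, for $s\in\{1,\dots,d-1\}$, let $\mathbf{F}_{\pi_s}$ be the same product with the two factors $\mathbf{M}_{\mathrm{Q}_s}$ and $\mathbf{M}_{\mathrm{Q}_{s+1}}$ interchanged, i.e. $\mathbf{F}_{\pi_s}=\mathbf{M}_{\mathrm{Q}_d}\cdots\mathbf{M}_{\mathrm{Q}_{s+2}}\mathbf{M}_{\mathrm{Q}_s}\mathbf{M}_{\mathrm{Q}_{s+1}}\mathbf{M}_{\mathrm{Q}_{s-1}}\cdots\mathbf{M}_{\mathrm{Q}_1}$. If either (i) $\mathrm{Q}_s$ and $\mathrm{Q}_{s+1}$ are not adjacent, or (ii) $\mathrm{Q}_s$ and $\mathrm{Q}_{s+1}$ are adjacent but neither of them lies on any cycle of the generalized line graph $\mathcal{L}(\mathsf{H}^\ast)$, then $\mathbf{F}$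 and $\mathbf{F}_{\pi_s}$ have the same characteristic polynomial.
   Context: $\mathrm{G}=(\mathrm{V},\mathrm{E})$ is a simple undirected graph with $\mathrm{V}=\{1,\dots,n\}$; $\mathrm{G}[\mathrm{S}]$ is the induced subgraph on $\mathrm{S}\subset\mathrm{V}$. A clique is a subset $\mathrm{C}\subset\mathrm{V}$ with $\mathrm{G}[\mathrm{C}]$ complete. A clique coverage of $\mathrm{G}$ is a finite set $\mathsf{H}^\ast$ of cliques whose union is $\mathrm{V}$ and whose union graph $\bigcup_{\mathrm{C}\in\mathsf{H}^\ast}\mathrm{G}[\mathrm{C}]$ is connected. Two distinct cliques are adjacent if they intersect. The generalized line graph $\mathcal{L}(\mathsf{H}^\ast)$ has vertex set $\mathsf{H}^\ast$, with distinct $\mathrm{C},\mathrm{C}'$ joined iff $\mathrm{C}\cap\mathrm{C}'\neq\emptyset$; a cycle means a cycle in this graph in the usual graph-theoretic sense. Fix $b\ge1$. A clique-gossip matrix for a clique $\mathrm{C}$ is a block matrix $\mathbf{M}_{\mathrm{C}}\in\mathbb{R}^{nb\times nb}$ with $b\times b$ blocks, whose $(i,j)$ block equals an arbitrary matrix $\mathbf{A}_{ij}(\mathrm{C})\in\mathbb{R}^{b\times b}$ when $i,j\in\mathrm{C}$, equals $\mathbf{I}_b$ when $i=j\notin\mathrm{C}$, and equals $\mathbf{0}_b$ otherwise. (It represents the update $\mathbf{x}_i\mapsto\sum_{j\in\mathrm{C}}\mathbf{A}_{ij}(\mathrm{C})\mathbf{x}_j$ for $i\in\mathrm{C}$, $\mathbf{x}_i\mapsto\mathbf{x}_i$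 for $i\notin\mathrm{C}$.) *)

theory Defs
  imports "Jordan_Normal_Form.Char_Poly"
begin

definition simple_graph :: "nat \<Rightarrow> (nat \<Rightarrow> nat \<Rightarrow> bool) \<Rightarrow> bool" where
  "simple_graph n E \<longleftrightarrow> (\<forall>i j. E i j \<longrightarrow> i \<in> {1..n} \<and> j \<in> {1..n} \<and> i \<noteq> j \<and> E j i)"

definition is_clique :: "nat \<Rightarrow> (nat \<Rightarrow> nat \<Rightarrow> bool) \<Rightarrow> nat set \<Rightarrow> bool" where
  "is_clique n E C \<longleftrightarrow> C \<subseteq> {1..n} \<and> (\<forall>i\<in>C. \<forall>j\<in>C. i \<noteq> j \<longrightarrow> E i j)"

definition union_graph_edges :: "nat set set \<Rightarrow> (nat \<times> nat) set" where
  "union_graph_edges H = {(i, j). i \<noteq> j \<and> (\<exists>C\<in>H. i \<in> C \<and> j \<in> C)}"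

definition clique_coverage :: "nat \<Rightarrow> (nat \<Rightarrow> nat \<Rightarrow> bool) \<Rightarrow> nat set set \<Rightarrow> bool" where
  "clique_coverage n E H \<longleftrightarrow> finite H \<and> (\<forall>C\<in>H. is_clique n E C) \<and> \<Union>H = {1..n} \<and>
     (\<forall>u\<in>{1..n}. \<forall>v\<in>{1..n}. (u, v) \<in> (union_graph_edges H)\<^sup>*)"

definition adjacent_cliques :: "nat set \<Rightarrow> nat set \<Rightarrow> bool" where
  "adjacent_cliques C C' \<longleftrightarrow> C \<noteq> C' \<and> C \<inter> C' \<noteq> {}"

definition is_cycle_LG :: "nat set set \<Rightarrow> nat set list \<Rightarrow> bool" where
  "is_cycle_LG H cs \<longleftrightarrow> length cs \<ge> 3 \<and> distinct cs \<and> set cs \<subseteq> H \<and>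
     (\<forall>k < length cs. adjacent_cliques (cs ! k) (cs ! ((k + 1) mod length cs)))"

definition on_cycle_LG :: "nat set set \<Rightarrow> nat set \<Rightarrow> bool" where
  "on_cycle_LG H C \<longleftrightarrow> (\<exists>cs. is_cycle_LG H cs \<and> C \<in> set cs)"

text \<open>Clique-gossip matrix of size nb x nb with b x b blocks; vertex i in {1..n} owns
  rows/columns (i-1)*b .. i*b-1 (0-based). A C i j k l is entry (k,l) of block A_ij(C).\<close>
definition gossip_mat :: "nat \<Rightarrow> nat \<Rightarrow> (nat set \<Rightarrow> nat \<Rightarrow> nat \<Rightarrow> nat \<Rightarrow> nat \<Rightarrow> real)
     \<Rightarrow> nat set \<Rightarrow> real mat" where
  "gossip_mat n b A C = mat (n * b) (n * b) (\<lambda>(p, q).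
     let i = p div b + 1; k = p mod b; j = q div b + 1; l = q mod b in
     if i \<in> C \<and> j \<in> C then A C i j k l else if p = q then 1 else 0)"

text \<open>Product M_{Q_d} ... M_{Q_1} for Q = [Q_1, ..., Q_d].\<close>
definition gossip_prod :: "nat \<Rightarrow> nat \<Rightarrow> (nat set \<Rightarrow> nat \<Rightarrow> nat \<Rightarrow> nat \<Rightarrow> nat \<Rightarrow> real)
     \<Rightarrow> nat set list \<Rightarrow> real mat" where
  "gossip_prod n b A Q = foldl (\<lambda>P C. gossip_mat n b A C * P) (1\<^sub>m (n * b)) Q"

text \<open>Swap the (1-based) entries s and s+1 of a list.\<close>
definition swap_adj :: "nat \<Rightarrow> 'a list \<Rightarrow> 'a list" where
  "swap_adj s Q = Q[s - 1 := Q ! s, s := Q ! (s - 1)]"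

end

(*
  A clique-gossip matrix acts as the identity outside the coordinates of its clique, so the
  matrices of disjoint cliques commute; if the two swapped cliques are disjoint, the two products
  are even equal. Otherwise, since Q_s lies on no cycle of the line graph, removing the edge
  between Q_s and Q_(s+1) separates them, and every clique of the component of Q_s is disjoint
  from every clique outside it, apart from that one edge. Sorting the factors of F into these two
  commuting groups writes F = A B C D and F_pi = A C B D, where A commutes with B and D, and C
  with D; two applications of char_poly (X Y) = char_poly (Y X) finish the proof.
*)
theory Submission
  imports Defs "HOL-Library.Transitive_Closure_Table"
begin

lemma assoc_mult_mat':
  fixes A B C :: "'a::semiring_0 mat"
  assumes "dim_col A = dim_row B" "dim_col B = dim_row C"
  shows "A * B * C = A * (B * C)"
  by (metis assms assoc_mult_mat carrier_mat_triv)

lemma char_poly_matrix_four_block_upper_right_zero: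
  fixes A :: "'a::comm_ring_1 mat"
  assumes "A \<in> carrier_mat n n" "C \<in> carrier_mat m n" "D \<in> carrier_mat m m"
  shows "char_poly_matrix (four_block_mat A (0\<^sub>m n m) C D) =
    four_block_mat (char_poly_matrix A) (0\<^sub>m n m) (map_mat (\<lambda>a. [:-a:]) C) (char_poly_matrix D)"
  using assms by (intro eq_matI) (auto simp: char_poly_matrix_def)

lemma char_poly_four_block_upper_right_zero:
  fixes A :: "'a::idom mat"
  assumes "A \<in> carrier_mat n n" "C \<in> carrier_mat m n" "D \<in> carrier_mat m m"
  shows "char_poly (four_block_mat A (0\<^sub>m n m) C D) = char_poly A * char_poly D"
  unfolding char_poly_def char_poly_matrix_four_block_upper_right_zero[OF assms]
  using assms by (intro det_four_block_mat_upper_right_zero) auto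

lemma char_poly_mult_commute:
  fixes X Y :: "'a::idom mat"
  assumes X: "X \<in> carrier_mat N N" and Y: "Y \<in> carrier_mat N N"
  shows "char_poly (X * Y) = char_poly (Y * X)"
proof -
  let ?Z = "0\<^sub>m N N :: 'a mat" and ?I = "1\<^sub>m N :: 'a mat"
  let ?M1 = "four_block_mat (X * Y) ?Z Y ?Z" and ?M2 = "four_block_mat ?Z ?Z Y (Y * X)"
  let ?P = "four_block_mat ?I X ?Z ?I" and ?P' = "four_block_mat ?I (- X) ?Z ?I"
  have XY: "X * Y \<in> carrier_mat N N" "Y * X \<in> carrier_mat N N" using X Y by auto
  \<comment> \<open>?M1 and ?M2 are conjugate by the unipotent block matrix ?P, and their characteristic
    polynomials are those of X * Y and Y * X times the nonzero factor char_poly ?Z.\<close>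
  have "?P * ?P' = 1\<^sub>m (N + N)" "?P' * ?P = 1\<^sub>m (N + N)"
    using X by (auto simp: mult_four_block_mat[of _ N N _ N _ N _ _ N _ N] four_block_one_mat[symmetric]
        simp del: four_block_one_mat)
  moreover have "?M1 = ?P * ?M2 * ?P'"
    using X Y XY by (auto simp: mult_four_block_mat[of _ N N _ N _ N _ _ N _ N]
        assoc_mult_mat[of X N N Y N X N] intro!: cong_four_block_mat)
  ultimately have "similar_mat ?M1 ?M2"
    using X Y XY by (intro similar_matI[of ?M1 ?M2 ?P ?P' "N + N"]) auto
  have "char_poly (X * Y) * char_poly ?Z = char_poly ?M1"
    using char_poly_four_block_upper_right_zero[OF XY(1) Y, of ?Z] by simp
  also have "\<dots> = char_poly ?M2"
    using \<open>similar_mat ?M1 ?M2\<close> by (rule char_poly_similar)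
  also have "\<dots> = char_poly (Y * X) * char_poly ?Z"
    using char_poly_four_block_upper_right_zero[OF _ Y XY(2), of ?Z] by (simp add: mult.commute)
  finally have "char_poly (X * Y) * char_poly ?Z = char_poly (Y * X) * char_poly ?Z" .
  moreover have "char_poly ?Z \<noteq> 0"
    using degree_monic_char_poly[of ?Z N] by auto
  ultimately show ?thesis by simp
qed

lemma char_poly_swap_middle_factors:
  fixes A B C D :: "'a::idom mat"
  assumes carrier: "A \<in> carrier_mat N N" "B \<in> carrier_mat N N" "C \<in> carrier_mat N N" "D \<in> carrier_mat N N"
    and AB: "A * B = B * A" and AD: "A * D = D * A" and CD: "C * D = D * C"
  shows "char_poly (A * B * C * D) = char_poly (A * C * B * D)"
proof -
  note [simp] = assoc_mult_mat[of _ N N _ N _ N]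
  have "A * B * C * D = B * (A * C * D)"
    using carrier by (subst AB) simp
  hence "char_poly (A * B * C * D) = char_poly (A * C * D * B)"
    using carrier by (simp add: char_poly_mult_commute[of B N])
  also have "A * C * D * B = A * (C * D) * B"
    using carrier by simp
  also have "\<dots> = A * D * C * B"
    using carrier by (simp add: CD)
  also have "\<dots> = D * (A * C * B)"
    using carrier by (simp add: AD)
  also have "char_poly \<dots> = char_poly (A * C * B * D)"
    using carrier by (simp add: char_poly_mult_commute[of D N])
  finally show ?thesis .
qed

definition identity_outside :: "nat set \<Rightarrow> 'a::{zero,one} mat \<Rightarrow> bool" where
  "identity_outside S X \<longleftrightarrow>
     (\<forall>p<dim_row X. \<forall>q<dim_col X. p \<notin> S \<or> q \<notin> S \<longrightarrow> X $$ (p, q) = (if p = q then 1 else 0))"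

lemma mult_identity_outside_entry:
  fixes X Y :: "'a::semiring_1 mat"
  assumes X: "X \<in> carrier_mat N N" and Y: "Y \<in> carrier_mat N N"
    and XS: "identity_outside S X" and YT: "identity_outside T Y" and ST: "S \<inter> T = {}"
    and p: "p < N" and q: "q < N"
  shows "(X * Y) $$ (p, q) = (if p \<in> S then X $$ (p, q) else Y $$ (p, q))"
proof -
  have entry: "(X * Y) $$ (p, q) = (\<Sum>r<N. X $$ (p, r) * Y $$ (r, q))"
    using X Y p q by (simp add: scalar_prod_def atLeast0LessThan)
  show ?thesis
  proof (cases "p \<in> S")
    case True
    have "X $$ (p, r) * Y $$ (r, q) = (if r = q then X $$ (p, r) else 0)" if r: "r < N" for r
    proof (cases "r \<in> S")
      case True
      with ST have "r \<notin> T" by auto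
      with YT Y r q have "Y $$ (r, q) = (if r = q then 1 else 0)"
        unfolding identity_outside_def by auto
      then show ?thesis by simp
    next
      case False
      with XS X \<open>p \<in> S\<close> p r have "X $$ (p, r) = 0"
        unfolding identity_outside_def by auto
      then show ?thesis by auto
    qed
    then show ?thesis
      using True q by (simp add: entry sum.delta')
  next
    case False
    with XS X p have "X $$ (p, r) * Y $$ (r, q) = (if r = p then Y $$ (r, q) else 0)" if "r < N" for r
      using that unfolding identity_outside_def by auto
    then show ?thesis
      using False p by (simp add: entry sum.delta)
  qed
qed

lemma identity_outside_disjoint_commute:
  fixes X Y :: "'a::semiring_1 mat"
  assumes X: "X \<in> carrier_mat N N" and Y: "Y \<in> carrier_mat N N"
    and "identity_outside S X" "identity_outside T Y" "S \<inter> T = {}"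
  shows "X * Y = Y * X"
proof (rule eq_matI)
  fix p q assume "p < dim_row (Y * X)" "q < dim_col (Y * X)"
  with X Y have pq: "p < N" "q < N" by auto
  with assms have "p \<notin> S \<Longrightarrow> p \<notin> T \<Longrightarrow> X $$ (p, q) = Y $$ (p, q)"
    unfolding identity_outside_def by auto
  with assms pq show "(X * Y) $$ (p, q) = (Y * X) $$ (p, q)"
    using mult_identity_outside_entry[OF X Y] mult_identity_outside_entry[OF Y X]
    by (auto simp: Int_commute)
qed (use X Y in auto)

fun mat_list_prod :: "nat \<Rightarrow> ('c \<Rightarrow> 'a::semiring_1 mat) \<Rightarrow> 'c list \<Rightarrow> 'a mat" where
  "mat_list_prod N f [] = 1\<^sub>m N"
| "mat_list_prod N f (c # cs) = mat_list_prod N f cs * f c"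

context
  fixes N :: nat and f :: "'c \<Rightarrow> 'a::semiring_1 mat"
  assumes f_carrier [simp]: "\<And>c. f c \<in> carrier_mat N N"
begin

lemma f_dims [simp]: "dim_row (f c) = N" "dim_col (f c) = N"
  using f_carrier[of c] unfolding carrier_mat_def by auto

lemma mat_list_prod_carrier [simp]: "mat_list_prod N f cs \<in> carrier_mat N N"
  by (induction cs) auto

lemma mat_list_prod_dims [simp]:
  "dim_row (mat_list_prod N f cs) = N" "dim_col (mat_list_prod N f cs) = N"
  using mat_list_prod_carrier[of cs] unfolding carrier_mat_def by auto

lemma foldl_mult_eq_mat_list_prod:
  "X \<in> carrier_mat N N \<Longrightarrow> foldl (\<lambda>P c. f c * P) X cs = mat_list_prod N f cs * X"
proof (induction cs arbitrary: X)
  case (Cons c cs)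
  then show ?case
    using Cons.IH[OF mult_carrier_mat[OF f_carrier Cons.prems]]
    by (simp add: assoc_mult_mat')
qed simp

lemma mat_list_prod_append:
  "mat_list_prod N f (xs @ ys) = mat_list_prod N f ys * mat_list_prod N f xs"
  by (induction xs) (auto simp: assoc_mult_mat')

lemma mat_list_prod_commute_mat:
  assumes Z: "Z \<in> carrier_mat N N" and comm: "\<And>c. c \<in> set cs \<Longrightarrow> f c * Z = Z * f c"
  shows "mat_list_prod N f cs * Z = Z * mat_list_prod N f cs"
  using comm
proof (induction cs)
  case (Cons c cs)
  have [simp]: "dim_row Z = N" "dim_col Z = N"
    using Z by auto
  have IH: "mat_list_prod N f cs * Z = Z * mat_list_prod N f cs"
    using Cons.prems by (intro Cons.IH) auto
  have "mat_list_prod N f (c # cs) * Z = mat_list_prod N f cs * (Z * f c)"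
    using Cons.prems by (simp add: assoc_mult_mat')
  also have "\<dots> = (mat_list_prod N f cs * Z) * f c"
    by (simp add: assoc_mult_mat')
  also have "\<dots> = Z * mat_list_prod N f (c # cs)"
    by (simp add: IH assoc_mult_mat')
  finally show ?case .
qed (use Z in simp)

lemma mat_list_prod_commute:
  assumes comm: "\<And>x y. x \<in> set xs \<Longrightarrow> y \<in> set ys \<Longrightarrow> f x * f y = f y * f x"
  shows "mat_list_prod N f xs * mat_list_prod N f ys = mat_list_prod N f ys * mat_list_prod N f xs"
proof (rule mat_list_prod_commute_mat)
  fix x assume x: "x \<in> set xs"
  have "mat_list_prod N f ys * f x = f x * mat_list_prod N f ys"
    by (rule mat_list_prod_commute_mat) (use comm x in auto)
  then show "f x * mat_list_prod N f ys = mat_list_prod N f ys * f x" by simp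
qed simp

lemma mat_list_prod_filter:
  assumes "\<And>x y. x \<in> set cs \<Longrightarrow> y \<in> set cs \<Longrightarrow> P x \<Longrightarrow> \<not> P y \<Longrightarrow> f x * f y = f y * f x"
  shows "mat_list_prod N f cs = mat_list_prod N f (filter P cs) * mat_list_prod N f (filter (\<lambda>c. \<not> P c) cs)"
  using assms
proof (induction cs)
  case (Cons c cs)
  let ?S = "mat_list_prod N f (filter P cs)" and ?T = "mat_list_prod N f (filter (\<lambda>c. \<not> P c) cs)"
  have IH: "mat_list_prod N f cs = ?S * ?T"
    using Cons.prems by (intro Cons.IH) auto
  show ?case
  proof (cases "P c")
    case True
    have "mat_list_prod N f (c # cs) = ?S * (?T * f c)"
      using IH by (simp add: assoc_mult_mat')
    also have "?T * f c = f c * ?T"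
      using Cons.prems True by (intro mat_list_prod_commute_mat) auto
    finally show ?thesis
      using True by (simp add: assoc_mult_mat')
  qed (use IH in \<open>simp add: assoc_mult_mat'\<close>)
qed simp

lemma mat_list_prod_swap_commuting:
  "f x * f y = f y * f x \<Longrightarrow> mat_list_prod N f (ys @ x # y # zs) = mat_list_prod N f (ys @ y # x # zs)"
  by (simp add: mat_list_prod_append assoc_mult_mat')

end

lemma char_poly_mat_list_prod_swap:
  fixes f :: "'c \<Rightarrow> 'a::idom mat"
  assumes f_carrier: "\<And>c. f c \<in> carrier_mat N N"
    and P: "P x" "\<not> P y" and fresh: "x \<notin> set (ys @ zs)" "y \<notin> set (ys @ zs)"
    and comm: "\<And>u v. u \<in> set (ys @ x # y # zs) \<Longrightarrow> v \<in> set (ys @ x # y # zs) \<Longrightarrow>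
      P u \<Longrightarrow> \<not> P v \<Longrightarrow> (u, v) \<noteq> (x, y) \<Longrightarrow> f u * f v = f v * f u"
  shows "char_poly (mat_list_prod N f (ys @ x # y # zs)) = char_poly (mat_list_prod N f (ys @ y # x # zs))"
proof -
  let ?p = "mat_list_prod N f"
  let ?YS = "filter P ys" and ?YT = "filter (\<lambda>c. \<not> P c) ys"
  let ?ZS = "filter P zs" and ?ZT = "filter (\<lambda>c. \<not> P c) zs"
  have [simp]: "dim_row (f c) = N" "dim_col (f c) = N" "dim_row (?p cs) = N" "dim_col (?p cs) = N"
    for c cs
    using f_carrier[of c] mat_list_prod_dims[OF f_carrier] unfolding carrier_mat_def by auto
  have commute: "?p us * ?p vs = ?p vs * ?p us"
    if "set us \<subseteq> {u \<in> set (ys @ x # zs). P u}" "set vs \<subseteq> {v \<in> set (ys @ y # zs). \<not> P v}"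
      and "x \<notin> set us \<or> y \<notin> set vs" for us vs
    using that fresh by (intro mat_list_prod_commute[OF f_carrier] comm) auto
  have split_ys: "?p ys = ?p ?YS * ?p ?YT" and split_zs: "?p zs = ?p ?ZS * ?p ?ZT"
    using fresh by (auto intro!: mat_list_prod_filter[OF f_carrier] comm)
  \<comment> \<open>In the notation of char_poly_swap_middle_factors, A, B, C, D are the products
    over ?ZS, y # ?ZT, ?YS @ [x] and ?YT.\<close>
  have AB: "?p ?ZS * ?p (y # ?ZT) = ?p (y # ?ZT) * ?p ?ZS"
    and AD: "?p ?ZS * ?p ?YT = ?p ?YT * ?p ?ZS"
    and CD: "?p (?YS @ [x]) * ?p ?YT = ?p ?YT * ?p (?YS @ [x])"
    and x_ZT: "?p [x] * ?p ?ZT = ?p ?ZT * ?p [x]"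
    and YS_y: "?p ?YS * ?p [y] = ?p [y] * ?p ?YS"
    and YS_ZT: "?p ?YS * ?p ?ZT = ?p ?ZT * ?p ?YS"
    by (rule commute; use P fresh in auto)+
  have "?p (ys @ y # x # zs) = ?p ?ZS * (?p ?ZT * f x) * (f y * ?p ?YS) * ?p ?YT"
    using split_ys split_zs by (simp add: mat_list_prod_append[OF f_carrier] assoc_mult_mat')
  also have "\<dots> = ?p ?ZS * (f x * ?p ?ZT) * (?p ?YS * f y) * ?p ?YT"
    using x_ZT YS_y by simp
  also have "\<dots> = ?p ?ZS * f x * (?p ?ZT * ?p ?YS) * f y * ?p ?YT"
    by (simp add: assoc_mult_mat')
  also have "\<dots> = ?p ?ZS * f x * (?p ?YS * ?p ?ZT) * f y * ?p ?YT"
    by (simp only: YS_ZT)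
  also have "\<dots> = ?p ?ZS * ?p (?YS @ [x]) * ?p (y # ?ZT) * ?p ?YT"
    by (simp add: mat_list_prod_append[OF f_carrier] assoc_mult_mat')
  finally have swapped: "?p (ys @ y # x # zs) = ?p ?ZS * ?p (?YS @ [x]) * ?p (y # ?ZT) * ?p ?YT" .
  have "?p (ys @ x # y # zs) = ?p ?ZS * ?p (y # ?ZT) * ?p (?YS @ [x]) * ?p ?YT"
    using split_ys split_zs by (simp add: mat_list_prod_append[OF f_carrier] assoc_mult_mat')
  moreover have "char_poly (?p ?ZS * ?p (y # ?ZT) * ?p (?YS @ [x]) * ?p ?YT) =
      char_poly (?p ?ZS * ?p (?YS @ [x]) * ?p (y # ?ZT) * ?p ?YT)"
    using mat_list_prod_carrier[OF f_carrier] by (intro char_poly_swap_middle_factors AB AD CD)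
  ultimately show ?thesis
    using swapped by simp
qed

lemma on_cycle_LG_of_path:
  assumes path: "rtrancl_path R x xs y"
    and R: "\<And>u v. R u v \<Longrightarrow> v \<in> H \<and> adjacent_cliques u v"
    and x: "x \<in> H" and yx: "adjacent_cliques y x" and no_edge: "\<not> R x y"
  shows "on_cycle_LG H x"
proof -
  obtain xs' where path': "rtrancl_path R x xs' y" and distinct: "distinct (x # xs')"
    using path by (rule rtrancl_path_distinct)
  have steps: "R ((x # xs') ! i) (xs' ! i)" if "i < length xs'" for i
    using path' that by (rule rtrancl_path_nth)
  have "xs' \<noteq> []"
    using path' yx by (auto elim: rtrancl_path.cases simp: adjacent_cliques_def)
  then have last: "last xs' = y"
    using path' by (simp add: rtrancl_path_last)
  have "xs' \<noteq> [y]"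
    using path' no_edge by (auto elim!: rtrancl_path.cases)
  with \<open>xs' \<noteq> []\<close> last have length: "length xs' \<ge> 2"
    by (cases xs' rule: rev_cases) (auto simp: Suc_le_eq)
  have "is_cycle_LG H (x # xs')"
    unfolding is_cycle_LG_def
  proof (intro conjI allI impI)
    show "set (x # xs') \<subseteq> H"
      using x R steps by (fastforce simp: in_set_conv_nth)
    fix k assume k: "k < length (x # xs')"
    show "adjacent_cliques ((x # xs') ! k) ((x # xs') ! ((k + 1) mod length (x # xs')))"
    proof (cases "k < length xs'")
      case True
      then show ?thesis using R steps by simp
    next
      case False
      with k have "k = length xs'" by simp
      with last \<open>xs' \<noteq> []\<close> yx show ?thesis by (simp add: last_conv_nth)
    qed
  qed (use length distinct in auto)
  then show ?thesis
    unfolding on_cycle_LG_def by auto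
qed

lemma separation_at_clique_off_cycles:
  assumes x: "x \<in> H" and xy: "adjacent_cliques x y" and acyclic: "\<not> on_cycle_LG H x"
  obtains P where "P x" "\<not> P y"
    and "\<And>u v. u \<in> H \<Longrightarrow> v \<in> H \<Longrightarrow> P u \<Longrightarrow> \<not> P v \<Longrightarrow> (u, v) \<noteq> (x, y) \<Longrightarrow> u \<inter> v = {}"
proof -
  \<comment> \<open>P is the component of x in the line graph with the edge between x and y removed;
    a path from x to y inside it would close a cycle through x.\<close>
  define R where "R u v \<longleftrightarrow> u \<in> H \<and> v \<in> H \<and> adjacent_cliques u v \<and> {u, v} \<noteq> {x, y}" for u v
  define P where "P = R\<^sup>*\<^sup>* x"
  have "\<not> P y"
  proof
    assume "P y"
    then obtain xs where "rtrancl_path R x xs y"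
      unfolding P_def rtranclp_eq_rtrancl_path by blast
    then have "on_cycle_LG H x"
      by (rule on_cycle_LG_of_path) (use x xy in \<open>auto simp: R_def adjacent_cliques_def\<close>)
    with acyclic show False ..
  qed
  moreover have "u \<inter> v = {}"
    if uv: "u \<in> H" "v \<in> H" "P u" "\<not> P v" "(u, v) \<noteq> (x, y)" for u v
  proof (rule ccontr)
    assume "u \<inter> v \<noteq> {}"
    moreover have "u \<noteq> v" and "u \<noteq> y"
      using uv \<open>\<not> P y\<close> by auto
    ultimately have "R u v"
      using uv by (auto simp: R_def adjacent_cliques_def doubleton_eq_iff)
    with \<open>P u\<close> \<open>\<not> P v\<close> show False
      unfolding P_def by (meson rtranclp.rtrancl_into_rtrancl)
  qed
  moreover have "P x"
    unfolding P_def by simp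
  ultimately show thesis
    using that by blast
qed

lemma gossip_mat_carrier [simp]: "gossip_mat n b A C \<in> carrier_mat (n * b) (n * b)"
  by (simp add: gossip_mat_def)

lemma gossip_mat_identity_outside: "identity_outside {p. p div b + 1 \<in> C} (gossip_mat n b A C)"
  by (auto simp: identity_outside_def gossip_mat_def Let_def)

lemma gossip_mat_disjoint_commute:
  "C \<inter> C' = {} \<Longrightarrow> gossip_mat n b A C * gossip_mat n b A C' = gossip_mat n b A C' * gossip_mat n b A C"
  by (rule identity_outside_disjoint_commute[OF gossip_mat_carrier gossip_mat_carrier
        gossip_mat_identity_outside gossip_mat_identity_outside]) auto

lemma gossip_prod_eq_mat_list_prod: "gossip_prod n b A Q = mat_list_prod (n * b) (gossip_mat n b A) Q"
  unfolding gossip_prod_def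
  by (simp add: foldl_mult_eq_mat_list_prod[OF gossip_mat_carrier] mat_list_prod_dims[OF gossip_mat_carrier])

lemma swap_adj_split:
  assumes "1 \<le> s" "s < length Q"
  obtains ys zs where "Q = ys @ Q ! (s - 1) # Q ! s # zs" and "swap_adj s Q = ys @ Q ! s # Q ! (s - 1) # zs"
proof -
  define x y ys zs where "x = Q ! (s - 1)" "y = Q ! s" "ys = take (s - 1) Q" "zs = drop (Suc s) Q"
  have "Q = ys @ x # drop s Q"
    using assms id_take_nth_drop[of "s - 1" Q] by (simp add: x_y_ys_zs_def)
  also have "drop s Q = y # zs"
    using assms by (simp add: x_y_ys_zs_def Cons_nth_drop_Suc)
  finally have Q: "Q = ys @ x # y # zs" .
  have "length ys = s - 1"
    using assms by (simp add: x_y_ys_zs_def)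
  then have "Q[s - 1 := y, s := x] = ys @ y # x # zs"
    using assms by (subst Q) (auto simp: list_update_append)
  with Q show thesis
    by (intro that) (simp_all add: swap_adj_def x_y_ys_zs_def)
qed

theorem theorem1:
  fixes n b d s :: nat and E :: "nat \<Rightarrow> nat \<Rightarrow> bool" and H :: "nat set set"
    and Q :: "nat set list" and A :: "nat set \<Rightarrow> nat \<Rightarrow> nat \<Rightarrow> nat \<Rightarrow> nat \<Rightarrow> real"
  assumes "simple_graph n E"
    and "b \<ge> 1"
    and "clique_coverage n E H"
    and "card H = d"
    and "distinct Q" and "set Q = H"
    and "1 \<le> s" and "s \<le> d - 1"
    and "\<not> adjacent_cliques (Q ! (s - 1)) (Q ! s) \<or>
         (adjacent_cliques (Q ! (s - 1)) (Q ! s) \<and>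
          \<not> on_cycle_LG H (Q ! (s - 1)) \<and> \<not> on_cycle_LG H (Q ! s))"
  shows "char_poly (gossip_prod n b A Q) = char_poly (gossip_prod n b A (swap_adj s Q))"
proof -
  define x y where "x = Q ! (s - 1)" "y = Q ! s"
  let ?M = "gossip_mat n b A"
  have "length Q = d"
    using distinct_card[OF assms(5)] assms(4,6) by simp
  with assms(7,8) have "s < length Q"
    by linarith
  then obtain ys zs where Q: "Q = ys @ x # y # zs" and swap: "swap_adj s Q = ys @ y # x # zs"
    using swap_adj_split[OF assms(7)] unfolding x_y_def by blast
  have distinct: "distinct (ys @ x # y # zs)" and H: "set (ys @ x # y # zs) = H"
    using Q assms(5,6) by metis+
  show ?thesis
  proof (cases "adjacent_cliques x y")
    case False
    with distinct have "?M x * ?M y = ?M y * ?M x"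
      by (intro gossip_mat_disjoint_commute) (auto simp: adjacent_cliques_def)
    then show ?thesis
      unfolding swap unfolding Q
      by (simp add: gossip_prod_eq_mat_list_prod mat_list_prod_swap_commuting[OF gossip_mat_carrier])
  next
    case True
    have "x \<in> H" and acyclic: "\<not> on_cycle_LG H x"
      using H assms(9) True unfolding x_y_def by auto
    obtain P where "P x" "\<not> P y"
      and separated: "\<And>u v. u \<in> H \<Longrightarrow> v \<in> H \<Longrightarrow> P u \<Longrightarrow> \<not> P v \<Longrightarrow> (u, v) \<noteq> (x, y) \<Longrightarrow> u \<inter> v = {}"
      using separation_at_clique_off_cycles[OF \<open>x \<in> H\<close> True acyclic] by blast
    have "?M u * ?M v = ?M v * ?M u"
      if "u \<in> set (ys @ x # y # zs)" "v \<in> set (ys @ x # y # zs)" "P u" "\<not> P v" "(u, v) \<noteq> (x, y)" for u v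
      using that H by (intro gossip_mat_disjoint_commute separated) auto
    moreover have "x \<notin> set (ys @ zs)" "y \<notin> set (ys @ zs)"
      using distinct by auto
    ultimately show ?thesis
      unfolding swap unfolding Q gossip_prod_eq_mat_list_prod
      using \<open>P x\<close> \<open>\<not> P y\<close> by (intro char_poly_mat_list_prod_swap[OF gossip_mat_carrier])
  qed
qed

end
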